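(* Fix $k\in\mathbb N$ and a real $s>1$. For every $\varepsilon>0$ there exists $\eta>0$ such that, for all sufficiently large $P$, all $R$ with $2\le R\le P^\eta$, all $Q$ with $1\le Q\le P^{k/2}$, all $M\ge R$ and all integers $q$ with $1\le q\le Q$, one has \[ \int_{\mathfrak N_q(Q,P)}|f(\alpha;P,R)|^s\,d\alpha\ll (MR)^{s-1}I_q(M;\mathfrak N)+QM^sP^{\varepsilon-k}, \] and likewise \[ \int_{\mathfrak M_q(Q,P)}|f(\alpha;P,R)|^s\,d\alpha\ll (MR)^{s-1}I_q(M;\mathfrak M)+QM^sP^{\varepsilon-k}, \] with implied constants depending only on $\varepsilon,\eta,k,s$.
   Context: For real $P,R\ge1$, $\mathscr A(P,R)$ is the set of integers $n\in[1,P]$ all of whose prime divisors are at most $R$; $e(z)=e^{2\pi iz}$; $f(\alpha;P,R)=\sum_{x\in\mathscr A(P,R)}e(\alpha x^k)$. For $q\in\mathbb N$, $u\mid q^\infty$ means every prime dividing $u$ divides $q$, and $\mathscr C_q(P,R)=\{n\in\mathscr A(P,R):n\mid q^\infty\}$. For a prime $\pi$, $\mathscr B(M,\pi,R)$ is the set of $v\in\mathscr A(M\pi,R)$ with $v>M$, $\pi\mid v$, and all prime divisors of $v$ at least $\pi$. Put $g^*_{q,\pi}(\alpha;P,m,R)=\sum_{w\in\mathscr A(P/m,\pi),\ (w,q)=1}\sum_{u\in\mathscr C_q(P/(mw),R)}e(\alpha(wu)^k)$. For $q\le Q$, $\mathfrak M_q(Q,P)$ is the union over $0\le a\le q$, $(a,q)=1$,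 of $\{\alpha\in[0,1):|q\alpha-a|\le QP^{-k}\}$ (empty if $q>Q$), and $\mathfrak N_q(Q,P)=\mathfrak M_q(Q,P)\setminus\mathfrak M_q(Q/2,P)$. For $\mathfrak B\in\{\mathfrak M,\mathfrak N\}$ define \[ I_q(M;\mathfrak B)=\sum_{\pi\le R}\ \sum_{\substack{m\in\mathscr B(M,\pi,R)\\(m,q)=1}}\int_{\mathfrak B_q(Q,P)}|g^*_{q,\pi}(\alpha m^k;P,m,R)|^s\,d\alpha, \] with $\pi$ running over primes. *)

theory Defs
  imports "HOL-Analysis.Analysis" "HOL-Computational_Algebra.Primes"
begin

definition e :: "real \<Rightarrow> complex" where
  "e z = exp (2 * pi * \<i> * complex_of_real z)"

definition smooth :: "real \<Rightarrow> real \<Rightarrow> nat set" where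
  "smooth P R = {n::nat. 1 \<le> n \<and> real n \<le> P \<and> (\<forall>p. prime p \<and> p dvd n \<longrightarrow> real p \<le> R)}"

definition fsum :: "nat \<Rightarrow> real \<Rightarrow> real \<Rightarrow> real \<Rightarrow> complex" where
  "fsum k \<alpha> P R = (\<Sum>x\<in>smooth P R. e (\<alpha> * real x ^ k))"

definition dvd_inf :: "nat \<Rightarrow> nat \<Rightarrow> bool" where
  "dvd_inf u q \<longleftrightarrow> (\<forall>p. prime p \<and> p dvd u \<longrightarrow> p dvd q)"

definition Cset :: "nat \<Rightarrow> real \<Rightarrow> real \<Rightarrow> nat set" where
  "Cset q P R = {n \<in> smooth P R. dvd_inf n q}"

definition Bset :: "real \<Rightarrow> nat \<Rightarrow> real \<Rightarrow> nat set" where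
  "Bset M \<pi> R = {v \<in> smooth (M * real \<pi>) R. real v > M \<and> \<pi> dvd v \<and>
                   (\<forall>p. prime p \<and> p dvd v \<longrightarrow> \<pi> \<le> p)}"

definition gstar :: "nat \<Rightarrow> nat \<Rightarrow> nat \<Rightarrow> real \<Rightarrow> real \<Rightarrow> nat \<Rightarrow> real \<Rightarrow> complex" where
  "gstar k q \<pi> \<alpha> P m R =
     (\<Sum>w\<in>{w \<in> smooth (P / real m) (real \<pi>). coprime w q}.
        \<Sum>u\<in>Cset q (P / (real m * real w)) R. e (\<alpha> * (real w * real u) ^ k))"

definition Marc :: "nat \<Rightarrow> nat \<Rightarrow> real \<Rightarrow> real \<Rightarrow> real set" where
  "Marc k q Q P = (if real q \<le> Q then
     {\<alpha>. 0 \<le> \<alpha> \<and> \<alpha> < 1 \<and> (\<exists>a::nat. a \<le> q \<and> coprime a q \<and>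
        \<bar>real q * \<alpha> - real a\<bar> \<le> Q * P powr (- real k))} else {})"

definition Narc :: "nat \<Rightarrow> nat \<Rightarrow> real \<Rightarrow> real \<Rightarrow> real set" where
  "Narc k q Q P = Marc k q Q P - Marc k q (Q / 2) P"

text \<open>I_q(M; B), where the arc family is passed as a function (Marc or Narc)\<close>
definition Iq :: "nat \<Rightarrow> real \<Rightarrow> (nat \<Rightarrow> nat \<Rightarrow> real \<Rightarrow> real \<Rightarrow> real set)
                   \<Rightarrow> nat \<Rightarrow> real \<Rightarrow> real \<Rightarrow> real \<Rightarrow> real \<Rightarrow> real" where
  "Iq k s Arc q Q P R M =
     (\<Sum>\<pi>\<in>{p::nat. prime p \<and> real p \<le> R}.
        \<Sum>m\<in>{m \<in> Bset M \<pi> R. coprime m q}.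
          (LINT \<alpha>:Arc k q Q P|lborel. cmod (gstar k q \<pi> (\<alpha> * real m ^ k) P m R) powr s))"

end

theory Submission
  imports Defs
begin

text \<open>Every \<open>x \<in> A(P, R)\<close> factors uniquely as \<open>x = v u\<close> with \<open>v\<close> coprime to \<open>q\<close> and
  \<open>u | q\<^sup>\<infinity>\<close>. If \<open>v > M\<close>, Vaughan's splitting writes \<open>v = m w\<close> uniquely, where the least prime
  factor \<open>\<pi>\<close> of \<open>m\<close> satisfies \<open>M < m \<le> M \<pi>\<close> and no prime factor of \<open>w\<close> exceeds \<open>\<pi>\<close>. Hence
  \<open>f(\<alpha>)\<close> is the sum of \<open>g*(\<alpha> m\<^sup>k)\<close> over at most \<open>M R\<close> pairs \<open>(\<pi>, m)\<close> plus at most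
  \<open>M \<cdot> #{u \<le> P : u | q\<^sup>\<infinity>}\<close> unimodular terms, and by Rankin's trick that count is \<open>O(P\<^sup>\<epsilon>)\<close>
  since \<open>q \<le> P powr (k/2)\<close>. Hoelder's inequality over the pairs and integration over an arc of
  measure at most \<open>4 Q P powr (-k)\<close> give both estimates, already with \<open>\<eta> = 1\<close> and without
  using \<open>k \<ge> 1\<close>.\<close>

lemma powr_sum_le_card_powr_sum:
  fixes b :: "'a \<Rightarrow> real"
  assumes "finite I" "\<And>i. i \<in> I \<Longrightarrow> b i \<ge> 0" "s \<ge> 1"
  shows "(\<Sum>i\<in>I. b i) powr s \<le> real (card I) powr (s - 1) * (\<Sum>i\<in>I. b i powr s)"
proof -
  define J where "J = {i\<in>I. b i > 0}"
  have "finite J" using assms(1) J_def by auto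
  have sum_J: "(\<Sum>i\<in>I. b i) = (\<Sum>i\<in>J. b i)" "(\<Sum>i\<in>I. b i powr s) = (\<Sum>i\<in>J. b i powr s)"
    unfolding J_def using assms by (intro sum.mono_neutral_right; force)+
  have "card J \<le> card I" unfolding J_def using assms(1) by (intro card_mono) auto
  show ?thesis
  proof (cases "J = {}")
    case True then show ?thesis using sum_J by simp
  next
    case False
    define n where "n = real (card J)"
    have "n > 0" using False \<open>finite J\<close> n_def by (simp add: card_gt_0_iff)
    have "(\<lambda>x. x powr s) (\<Sum>i\<in>J. (1/n) *\<^sub>R b i) \<le> (\<Sum>i\<in>J. (1/n) * (b i powr s))"
      using \<open>n > 0\<close> by (intro convex_on_sum[OF \<open>finite J\<close> False powr_convex[OF assms(3)]])
        (auto simp: n_def J_def)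
    hence "((\<Sum>i\<in>J. b i) / n) powr s \<le> (\<Sum>i\<in>J. b i powr s) / n"
      by (simp add: sum_distrib_left[symmetric] sum_divide_distrib[symmetric] divide_inverse
          mult.commute)
    hence "(\<Sum>i\<in>J. b i) powr s \<le> n powr s * ((\<Sum>i\<in>J. b i powr s) / n)"
      using \<open>n > 0\<close> by (simp add: powr_divide sum_nonneg J_def divide_le_eq mult.commute)
    also have "\<dots> = n powr (s - 1) * (\<Sum>i\<in>J. b i powr s)"
      using \<open>n > 0\<close> by (simp add: powr_diff)
    also have "\<dots> \<le> real (card I) powr (s - 1) * (\<Sum>i\<in>J. b i powr s)"
      using \<open>n > 0\<close> \<open>card J \<le> card I\<close> assms(3)
      by (intro mult_right_mono powr_mono2 sum_nonneg) (auto simp: n_def)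
    finally show ?thesis using sum_J by simp
  qed
qed

lemma powr_add_le:
  fixes a b s :: real
  assumes "a \<ge> 0" "b \<ge> 0" "s \<ge> 1"
  shows "(a + b) powr s \<le> 2 powr (s - 1) * (a powr s + b powr s)"
  using powr_sum_le_card_powr_sum[of UNIV "\<lambda>i. if i then a else b" s] assms
  by (simp add: UNIV_bool add.commute)

section \<open>Rankin's bound for numbers composed of given primes\<close>

definition smooth_over :: "nat set \<Rightarrow> real \<Rightarrow> nat set" where
  "smooth_over F X = {u. 1 \<le> u \<and> real u \<le> X \<and> (\<forall>p. prime p \<and> p dvd u \<longrightarrow> p \<in> F)}"

lemma finite_smooth_over [simp]: "finite (smooth_over F X)"
  by (rule finite_subset[of _ "{..nat \<lfloor>X\<rfloor>}"]) (auto simp: smooth_over_def le_nat_floor)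

lemma smooth_over_insert_subset:
  assumes "prime p"
  shows "smooth_over (insert p F) X
           \<subseteq> (\<Union>e\<le>nat \<lfloor>X\<rfloor>. (\<lambda>u. p ^ e * u) ` smooth_over F (X / real p ^ e))"
proof
  fix u assume "u \<in> smooth_over (insert p F) X"
  then have "u \<ge> 1" and "real u \<le> X" and u_primes: "\<forall>r. prime r \<and> r dvd u \<longrightarrow> r \<in> insert p F"
    unfolding smooth_over_def by auto
  define e where "e = multiplicity p u"
  define u' where "u' = u div p ^ e"
  have "p ^ e dvd u" unfolding e_def by (rule multiplicity_dvd)
  then have u_eq: "u = p ^ e * u'" unfolding u'_def by simp
  have "\<not> p dvd u'"
    unfolding u'_def e_def using \<open>u \<ge> 1\<close> assms by (intro multiplicity_decompose) auto
  have "u' \<ge> 1" using u_eq \<open>u \<ge> 1\<close> by (cases "u' = 0") auto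
  have "real p ^ e \<le> X"
  proof -
    have "p ^ e \<le> u" using \<open>p ^ e dvd u\<close> \<open>u \<ge> 1\<close> by (intro dvd_imp_le) auto
    then show ?thesis using \<open>real u \<le> X\<close> by (metis of_nat_le_iff of_nat_power order_trans)
  qed
  moreover have "real e < real p ^ e"
  proof -
    have "real e < 2 ^ e"
      using less_exp[of e] by (metis of_nat_less_iff of_nat_numeral of_nat_power)
    also have "\<dots> \<le> real p ^ e" using prime_ge_2_nat[OF assms] by (intro power_mono) auto
    finally show ?thesis .
  qed
  ultimately have "e \<le> nat \<lfloor>X\<rfloor>" by (intro le_nat_floor) linarith
  have "real p ^ e * real u' \<le> X" using u_eq \<open>real u \<le> X\<close> by (metis of_nat_mult of_nat_power)
  then have "real u' \<le> X / real p ^ e" using prime_gt_0_nat[OF assms] by (simp add: field_simps)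
  moreover have "r \<in> F" if "prime r" "r dvd u'" for r
    using that u_primes u_eq \<open>\<not> p dvd u'\<close> by auto
  ultimately have "u' \<in> smooth_over F (X / real p ^ e)"
    unfolding smooth_over_def using \<open>u' \<ge> 1\<close> by auto
  then show "u \<in> (\<Union>e\<le>nat \<lfloor>X\<rfloor>. (\<lambda>u. p ^ e * u) ` smooth_over F (X / real p ^ e))"
    using \<open>e \<le> nat \<lfloor>X\<rfloor>\<close> u_eq by blast
qed

lemma card_smooth_over_insert_le:
  assumes "prime p"
  shows "card (smooth_over (insert p F) X)
           \<le> (\<Sum>e\<le>nat \<lfloor>X\<rfloor>. card (smooth_over F (X / real p ^ e)))"
proof -
  have "card (smooth_over (insert p F) X)
      \<le> card (\<Union>e\<le>nat \<lfloor>X\<rfloor>. (\<lambda>u. p ^ e * u) ` smooth_over F (X / real p ^ e))"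
    by (intro card_mono smooth_over_insert_subset assms) auto
  also have "\<dots> \<le> (\<Sum>e\<le>nat \<lfloor>X\<rfloor>. card ((\<lambda>u. p ^ e * u) ` smooth_over F (X / real p ^ e)))"
    by (intro card_UN_le) auto
  also have "\<dots> \<le> (\<Sum>e\<le>nat \<lfloor>X\<rfloor>. card (smooth_over F (X / real p ^ e)))"
    by (intro sum_mono card_image_le finite_smooth_over)
  finally show ?thesis .
qed

lemma divide_power_powr:
  fixes b x :: real
  assumes "b > 0"
  shows "(x / b ^ n) powr \<delta> = x powr \<delta> * (b powr (-\<delta>)) ^ n"
proof -
  have "(b ^ n) powr \<delta> = b powr (real n * \<delta>)"
    using assms by (simp add: powr_realpow[symmetric] powr_powr)
  moreover have "(b powr (-\<delta>)) ^ n = inverse (b powr (real n * \<delta>))"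
    using assms by (subst powr_power) (simp_all add: powr_minus)
  ultimately show ?thesis unfolding powr_divide by (simp add: divide_inverse)
qed

lemma euler_factor_pos:
  assumes "prime p" "\<delta> > 0"
  shows "1 / (1 - real p powr (-\<delta>)) > 0"
  using prime_ge_2_nat[OF assms(1)] assms(2) by (simp add: powr_less_one)

lemma card_smooth_over_le:
  assumes "finite F" "\<forall>p\<in>F. prime p" "\<delta> > 0" "X \<ge> 0"
  shows "real (card (smooth_over F X)) \<le> (\<Prod>p\<in>F. 1 / (1 - real p powr (-\<delta>))) * X powr \<delta>"
  using assms(1,2,4)
proof (induction F arbitrary: X rule: finite_induct)
  case empty
  show ?case
  proof (cases "X < 1")
    case True
    then have "smooth_over {} X = {}" by (auto simp: smooth_over_def)
    then show ?thesis by simp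
  next
    case False
    have "smooth_over {} X \<subseteq> {1}"
      unfolding smooth_over_def using prime_factor_nat by fastforce
    then have "card (smooth_over {} X) \<le> card {1::nat}" by (intro card_mono) auto
    moreover have "1 \<le> X powr \<delta>" using False \<open>\<delta> > 0\<close> by (simp add: ge_one_powr_ge_zero)
    ultimately show ?thesis by simp
  qed
next
  case (insert p F)
  have "prime p" using insert by auto
  define r where "r = real p powr (-\<delta>)"
  have "0 < r" "r < 1"
    using euler_factor_pos[OF \<open>prime p\<close> \<open>\<delta> > 0\<close>] prime_gt_0_nat[OF \<open>prime p\<close>]
    unfolding r_def by (simp_all add: field_simps)
  define c where "c = (\<Prod>p\<in>F. 1 / (1 - real p powr (-\<delta>)))"
  have "c \<ge> 0"
    unfolding c_def using insert.prems euler_factor_pos \<open>\<delta> > 0\<close>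
    by (intro prod_nonneg) (simp add: less_imp_le)
  have "real (card (smooth_over (insert p F) X))
      \<le> (\<Sum>e\<le>nat \<lfloor>X\<rfloor>. real (card (smooth_over F (X / real p ^ e))))"
    using card_smooth_over_insert_le[OF \<open>prime p\<close>, of F X] of_nat_mono by (metis of_nat_sum)
  also have "\<dots> \<le> (\<Sum>e\<le>nat \<lfloor>X\<rfloor>. c * (X / real p ^ e) powr \<delta>)"
    unfolding c_def using insert by (intro sum_mono insert.IH) auto
  also have "\<dots> = (\<Sum>e\<le>nat \<lfloor>X\<rfloor>. c * X powr \<delta> * r ^ e)"
    unfolding r_def using prime_gt_0_nat[OF \<open>prime p\<close>] by (simp add: divide_power_powr mult.assoc)
  also have "\<dots> = c * X powr \<delta> * (\<Sum>e\<le>nat \<lfloor>X\<rfloor>. r ^ e)" by (simp add: sum_distrib_left)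
  also have "\<dots> \<le> c * X powr \<delta> * (1 / (1 - r))"
    using \<open>c \<ge> 0\<close> \<open>0 < r\<close> \<open>r < 1\<close> by (intro mult_left_mono less_imp_le[OF geometric_sum_less]) auto
  also have "\<dots> = (\<Prod>p\<in>insert p F. 1 / (1 - real p powr (-\<delta>))) * X powr \<delta>"
    using insert unfolding c_def r_def by simp
  finally show ?case .
qed

lemma prod_prime_factors_le: "(q::nat) > 0 \<Longrightarrow> (\<Prod>p\<in>prime_factors q. p) \<le> q"
proof -
  assume "q > 0"
  have "(\<Prod>p\<in>prime_factors q. p) \<le> (\<Prod>p\<in>prime_factors q. p ^ multiplicity p q)"
  proof (intro prod_mono conjI)
    fix p assume p: "p \<in> prime_factors q"
    then show "p \<le> p ^ multiplicity p q"
      using p prime_factors_multiplicity prime_gt_0_nat[of p]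
      by (intro self_le_power) auto
  qed simp
  also have "\<dots> = q" using prod_prime_factors[of q] \<open>q > 0\<close> by simp
  finally show ?thesis .
qed

text \<open>A prime with \<open>p powr \<delta> \<ge> 2\<close> contributes a factor at most \<open>p powr \<delta>\<close> to the Euler
  product; each of the fewer than \<open>2 powr (1/\<delta>)\<close> remaining primes contributes at most
  \<open>1 / (1 - 2 powr (-\<delta>))\<close>.\<close>
definition rankin_const :: "real \<Rightarrow> real" where
  "rankin_const \<delta> = (1 / (1 - 2 powr (-\<delta>))) ^ nat \<lceil>2 powr (1/\<delta>)\<rceil>"

lemma rankin_const_nonneg: "\<delta> > 0 \<Longrightarrow> rankin_const \<delta> \<ge> 0"
  unfolding rankin_const_def by (simp add: powr_less_one less_imp_le)

lemma euler_factor_le: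
  assumes "prime p" "\<delta> > 0"
  shows "1 / (1 - real p powr (-\<delta>))
           \<le> real p powr \<delta> * (if real p powr \<delta> \<ge> 2 then 1 else 1 / (1 - 2 powr (-\<delta>)))"
proof -
  have "real p \<ge> 2" using prime_ge_2_nat[OF assms(1)] by simp
  have pd: "real p powr (-\<delta>) = 1 / real p powr \<delta>" by (simp add: powr_minus divide_inverse)
  have "real p powr \<delta> > 0" using \<open>real p \<ge> 2\<close> by simp
  have "real p powr \<delta> \<ge> 1" using \<open>real p \<ge> 2\<close> assms(2) by (simp add: ge_one_powr_ge_zero)
  show ?thesis
  proof (cases "real p powr \<delta> \<ge> 2")
    case True
    have "1 / (1 - real p powr (-\<delta>)) = real p powr \<delta> / (real p powr \<delta> - 1)"
      using True prime_gt_0_nat[OF assms(1)] unfolding pd by (simp add: field_simps)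
    also have "\<dots> \<le> real p powr \<delta>" using True by (simp add: divide_le_eq mult_le_cancel_left1)
    finally show ?thesis using True by simp
  next
    case False
    have "2 powr (-\<delta>) \<ge> real p powr (-\<delta>)"
      using \<open>real p \<ge> 2\<close> assms(2) by (intro powr_mono2') auto
    moreover have "real p powr (-\<delta>) < 1" "(2::real) powr (-\<delta>) < 1"
      using \<open>real p \<ge> 2\<close> assms(2) by (auto intro: powr_less_one)
    ultimately have "1 / (1 - real p powr (-\<delta>)) \<le> 1 / (1 - 2 powr (-\<delta>))"
      by (intro divide_left_mono) auto
    also have "\<dots> \<le> real p powr \<delta> * (1 / (1 - 2 powr (-\<delta>)))"
      using \<open>real p powr \<delta> \<ge> 1\<close> \<open>2 powr (-\<delta>) < 1\<close> by (simp add: divide_right_mono)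
    finally show ?thesis using False by simp
  qed
qed

lemma card_small_prime_factors_le:
  assumes "\<delta> > 0"
  shows "card {p \<in> prime_factors q. real p powr \<delta> < 2} \<le> nat \<lceil>2 powr (1/\<delta>)\<rceil>"
proof -
  have "real p < 2 powr (1/\<delta>)" if "p \<in> prime_factors q" "real p powr \<delta> < 2" for p
  proof -
    have "real p = (real p powr \<delta>) powr (1/\<delta>)" using assms by (simp add: powr_powr)
    also have "\<dots> < 2 powr (1/\<delta>)" using that assms by (intro powr_less_mono2) auto
    finally show ?thesis .
  qed
  then have "{p \<in> prime_factors q. real p powr \<delta> < 2} \<subseteq> {..<nat \<lceil>2 powr (1/\<delta>)\<rceil>}"
    by (auto simp: zless_nat_eq_int_zless less_ceiling_iff)
  then show ?thesis using card_mono[of "{..<nat \<lceil>2 powr (1/\<delta>)\<rceil>}"] by fastforce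
qed

lemma euler_product_prime_factors_le:
  assumes "\<delta> > 0" "(q::nat) > 0"
  shows "(\<Prod>p\<in>prime_factors q. 1 / (1 - real p powr (-\<delta>))) \<le> rankin_const \<delta> * real q powr \<delta>"
proof -
  define B where "B = 1 / (1 - 2 powr (-\<delta>))"
  define small where "small = {p\<in>prime_factors q. real p powr \<delta> < 2}"
  define h where "h p = (if real p powr \<delta> \<ge> 2 then 1 else B)" for p :: nat
  have "B \<ge> 1"
    unfolding B_def using assms(1) by (simp add: powr_less_one field_simps)
  have "card small \<le> nat \<lceil>2 powr (1/\<delta>)\<rceil>"
    unfolding small_def using assms(1) by (rule card_small_prime_factors_le)
  have "(\<Prod>p\<in>prime_factors q. h p) = B ^ card small"
    unfolding h_def small_def
    by (subst prod.mono_neutral_cong_right[of _ small]) (auto simp: small_def)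
  also have "\<dots> \<le> rankin_const \<delta>"
    unfolding rankin_const_def B_def[symmetric]
    using \<open>B \<ge> 1\<close> \<open>card small \<le> _\<close> by (rule power_increasing[rotated])
  finally have h_le: "(\<Prod>p\<in>prime_factors q. h p) \<le> rankin_const \<delta>" .
  have "(\<Prod>p\<in>prime_factors q. 1 / (1 - real p powr (-\<delta>)))
      \<le> (\<Prod>p\<in>prime_factors q. real p powr \<delta> * h p)"
  proof (intro prod_mono conjI)
    fix p assume "p \<in> prime_factors q"
    then have "prime p" by auto
    then show "0 \<le> 1 / (1 - real p powr (-\<delta>))" using euler_factor_pos assms(1) less_imp_le by blast
    show "1 / (1 - real p powr (-\<delta>)) \<le> real p powr \<delta> * h p"
      unfolding h_def B_def using euler_factor_le[OF \<open>prime p\<close> assms(1)] .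
  qed
  also have "\<dots> = real (\<Prod>p\<in>prime_factors q. p) powr \<delta> * (\<Prod>p\<in>prime_factors q. h p)"
    by (simp add: prod.distrib prod_powr_distrib)
  also have "\<dots> \<le> real q powr \<delta> * rankin_const \<delta>"
    using prod_prime_factors_le[OF assms(2)] h_le \<open>B \<ge> 1\<close> assms(1)
    by (intro mult_mono powr_mono2 prod_nonneg) (auto simp: h_def simp del: of_nat_prod)
  finally show ?thesis by (simp add: mult.commute)
qed

section \<open>Two unique factorisations\<close>

lemma coprimeI_primes:
  fixes a b :: nat
  assumes "\<And>r. prime r \<Longrightarrow> r dvd a \<Longrightarrow> r dvd b \<Longrightarrow> False"
  shows "coprime a b"
proof (rule ccontr)
  assume "\<not> coprime a b"
  then obtain r where "prime r" "r dvd gcd a b"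
    using prime_factor_nat by (metis coprime_iff_gcd_eq_1)
  then show False using assms by auto
qed

lemma dvd_inf_coprime:
  assumes "dvd_inf u q" "coprime v q"
  shows "coprime u v"
proof (rule coprimeI_primes)
  fix r assume "prime r" "r dvd u" "r dvd v"
  then have "r dvd q" using assms(1) unfolding dvd_inf_def by blast
  then show False
    using \<open>prime r\<close> \<open>r dvd v\<close> assms(2) by (meson coprime_common_divisor not_prime_unit)
qed

lemma coprime_dvd_inf_factorization:
  fixes x q :: nat
  assumes "x > 0"
  obtains v u where "x = v * u" "coprime v q" "dvd_inf u q"
  using assms
proof (induction x arbitrary: thesis rule: less_induct)
  case (less x)
  show ?case
  proof (cases "x = 1")
    case True
    then show ?thesis using less.prems(1)[of 1 1] by (simp add: dvd_inf_def)
  next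
    case False
    then obtain p y where "prime p" "x = p * y" using prime_factor_nat by (metis dvdE)
    with less.prems(2) have "y > 0" "y < x" using prime_ge_2_nat[of p] by auto
    then obtain v u where vu: "y = v * u" "coprime v q" "dvd_inf u q" using less.IH by metis
    show ?thesis
    proof (cases "p dvd q")
      case True
      have "dvd_inf (p * u) q"
        using vu(3) True \<open>prime p\<close> unfolding dvd_inf_def
        by (metis prime_dvd_mult_iff primes_dvd_imp_eq)
      then show ?thesis using less.prems(1)[of v "p * u"] vu \<open>x = p * y\<close> by (simp add: ac_simps)
    next
      case False
      then have "coprime (p * v) q" using vu(2) \<open>prime p\<close> by (simp add: prime_imp_coprime)
      then show ?thesis using less.prems(1)[of "p * v" u] vu \<open>x = p * y\<close> by (simp add: ac_simps)
    qed
  qed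
qed

lemma coprime_dvd_inf_factorization_unique:
  fixes v u v' u' q :: nat
  assumes "v * u = v' * u'" "coprime v q" "coprime v' q" "dvd_inf u q" "dvd_inf u' q"
  shows "u = u'"
proof (rule dvd_antisym)
  have "u dvd v' * u'" "u' dvd v * u" using assms(1) by (metis dvd_triv_right)+
  then show "u dvd u'" "u' dvd u"
    using dvd_inf_coprime[OF assms(4,3)] dvd_inf_coprime[OF assms(5,2)]
    by (simp_all add: coprime_dvd_mult_right_iff)
qed

text \<open>The splitting of Vaughan's iterative method behind the sets \<open>B(M, \<pi>, R)\<close>.\<close>
definition vaughan_split :: "real \<Rightarrow> nat \<Rightarrow> nat \<Rightarrow> nat \<Rightarrow> bool" where
  "vaughan_split M \<pi> m w \<longleftrightarrow> prime \<pi> \<and> \<pi> dvd m \<and> (\<forall>p. prime p \<and> p dvd m \<longrightarrow> \<pi> \<le> p)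
     \<and> (\<forall>p. prime p \<and> p dvd w \<longrightarrow> p \<le> \<pi>) \<and> M < real m \<and> real m \<le> M * real \<pi>"

lemma vaughan_splitD:
  assumes "vaughan_split M \<pi> m w"
  shows "prime \<pi>" "\<pi> dvd m" "\<And>p. prime p \<Longrightarrow> p dvd m \<Longrightarrow> \<pi> \<le> p"
    "\<And>p. prime p \<Longrightarrow> p dvd w \<Longrightarrow> p \<le> \<pi>" "M < real m" "real m \<le> M * real \<pi>"
  using assms unfolding vaughan_split_def by auto

lemma vaughan_split_exists:
  assumes "M \<ge> 1" "real v > M"
  obtains \<pi> m w where "vaughan_split M \<pi> m w" "v = m * w"
  using assms(2)
proof (induction v arbitrary: thesis rule: less_induct)
  case (less v)
  have "v \<noteq> 1" "v > 0" using less.prems(2) assms(1) by auto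
  define p where "p = (LEAST p. prime p \<and> p dvd v)"
  have "prime p \<and> p dvd v"
    unfolding p_def using prime_factor_nat[OF \<open>v \<noteq> 1\<close>] by (metis (mono_tags, lifting) LeastI)
  have p_least: "p \<le> r" if "prime r" "r dvd v" for r
    unfolding p_def using that by (simp add: Least_le)
  obtain y where "v = p * y" using \<open>prime p \<and> p dvd v\<close> by blast
  show ?case
  proof (cases "real y > M")
    case True
    have "y < v" using \<open>v = p * y\<close> \<open>v > 0\<close> prime_ge_2_nat[of p] \<open>prime p \<and> p dvd v\<close> by auto
    then obtain \<pi> m w where split: "vaughan_split M \<pi> m w" "y = m * w"
      using less.IH True by metis
    have "\<pi> dvd v" using split \<open>v = p * y\<close> unfolding vaughan_split_def by auto
    then have "p \<le> \<pi>" using p_least split(1) unfolding vaughan_split_def by blast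
    then have "vaughan_split M \<pi> m (p * w)"
      using split(1) \<open>prime p \<and> p dvd v\<close> unfolding vaughan_split_def
      by (metis prime_dvd_mult_iff primes_dvd_imp_eq)
    then show ?thesis using less.prems(1) split(2) \<open>v = p * y\<close> by (simp add: ac_simps)
  next
    case False
    have "real v \<le> M * real p"
      using \<open>v = p * y\<close> False mult_left_mono[of "real y" M "real p"] by (simp add: mult.commute)
    then have "vaughan_split M p v 1"
      using \<open>prime p \<and> p dvd v\<close> p_least less.prems(2) unfolding vaughan_split_def by auto
    then show ?thesis using less.prems(1) by simp
  qed
qed

text \<open>If \<open>\<pi> < \<pi>'\<close>, then \<open>m'\<close> is coprime to \<open>w\<close>, so \<open>m = m' t\<close> with \<open>\<pi> | t\<close> and \<open>m \<ge> \<pi> m' > M \<pi>\<close>.\<close>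
lemma vaughan_split_le_least_prime:
  assumes "vaughan_split M \<pi> m w" "vaughan_split M \<pi>' m' w'" "m * w = m' * w'" "M \<ge> 0"
  shows "\<pi>' \<le> \<pi>"
proof (rule ccontr)
  assume "\<not> \<pi>' \<le> \<pi>"
  note S = vaughan_splitD[OF assms(1)] and S' = vaughan_splitD[OF assms(2)]
  have "coprime m' w"
  proof (rule coprimeI_primes)
    fix r assume "prime r" "r dvd m'" "r dvd w"
    then show False using S(4)[of r] S'(3)[of r] \<open>\<not> \<pi>' \<le> \<pi>\<close> by linarith
  qed
  moreover have "m' dvd m * w" using assms(3) by (metis dvd_triv_left)
  ultimately have "m' dvd m" by (simp add: coprime_dvd_mult_left_iff)
  then obtain t where t: "m = m' * t" by blast
  have "\<not> \<pi> dvd m'" using S'(3)[OF S(1)] \<open>\<not> \<pi>' \<le> \<pi>\<close> by blast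
  then have "\<pi> dvd t" using S(1,2) t by (simp add: prime_dvd_mult_iff)
  moreover have "t \<noteq> 0" using S(5) t assms(4) by (intro notI) simp
  ultimately have "real \<pi> \<le> real t" by (simp add: dvd_imp_le)
  then have "real m' * real \<pi> \<le> M * real \<pi>"
    using S(6) t mult_left_mono[of "real \<pi>" "real t" "real m'"] by simp
  then have "real m' \<le> M" using prime_gt_0_nat[OF S(1)] by simp
  then show False using S'(5) by simp
qed

text \<open>Otherwise \<open>\<pi>\<close> divides \<open>b\<close>, which forces \<open>a = 1\<close> and then \<open>m \<ge> \<pi> m' > M \<pi>\<close>.\<close>
lemma vaughan_split_cofactor_eq_1:
  assumes "vaughan_split M \<pi> m w" "vaughan_split M \<pi> m' w'" "m * a = m' * b" "coprime a b"
    "\<And>p. prime p \<Longrightarrow> p dvd a \<Longrightarrow> p \<le> \<pi>" "\<And>p. prime p \<Longrightarrow> p dvd b \<Longrightarrow> p \<le> \<pi>"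
  shows "b = 1"
proof (rule ccontr)
  assume "b \<noteq> 1"
  note S = vaughan_splitD[OF assms(1)] and S' = vaughan_splitD[OF assms(2)]
  have "b dvd m * a" "a dvd m' * b" using assms(3) by (metis dvd_triv_right)+
  then have "b dvd m" "a dvd m'" using assms(4)
    by (simp_all add: coprime_commute[of a b] coprime_dvd_mult_left_iff)
  obtain r where "prime r" "r dvd b" using prime_factor_nat[OF \<open>b \<noteq> 1\<close>] by blast
  then have "r = \<pi>" using S(3)[of r] assms(6)[of r] \<open>b dvd m\<close> by (meson dvd_trans le_antisym)
  then have "\<pi> dvd b" using \<open>r dvd b\<close> by simp
  have "a = 1"
  proof (rule ccontr)
    assume "a \<noteq> 1"
    obtain r' where "prime r'" "r' dvd a" using prime_factor_nat[OF \<open>a \<noteq> 1\<close>] by blast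
    then have "r' = \<pi>" using S'(3)[of r'] assms(5)[of r'] \<open>a dvd m'\<close> by (meson dvd_trans le_antisym)
    then show False
      using \<open>r' dvd a\<close> \<open>\<pi> dvd b\<close> assms(4) S(1) by (metis coprime_common_divisor not_prime_unit)
  qed
  have "b \<noteq> 0"
  proof
    assume "b = 0"
    then have "m = 0" using assms(3) \<open>a = 1\<close> by simp
    then show False using S(5,6) prime_gt_0_nat[OF S(1)] by (simp add: zero_le_mult_iff)
  qed
  then have "real \<pi> \<le> real b" using \<open>\<pi> dvd b\<close> by (simp add: dvd_imp_le)
  then have "real m' * real \<pi> \<le> real m' * real b" by (simp add: mult_left_mono)
  also have "\<dots> = real m" using assms(3) \<open>a = 1\<close> by (metis mult.right_neutral of_nat_mult)
  also have "\<dots> \<le> M * real \<pi>" by (rule S(6))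
  finally have "real m' \<le> M" using prime_gt_0_nat[OF S(1)] by simp
  then show False using S'(5) by simp
qed

lemma vaughan_split_unique:
  assumes "vaughan_split M \<pi> m w" "vaughan_split M \<pi>' m' w'" "m * w = m' * w'"
    "w > 0" "M \<ge> 0"
  shows "\<pi> = \<pi>'" "m = m'" "w = w'"
proof -
  show "\<pi> = \<pi>'"
    using vaughan_split_le_least_prime[OF assms(1-3,5)]
      vaughan_split_le_least_prime[OF assms(2,1) assms(3)[symmetric] assms(5)] by simp
  obtain a b where ab: "w = a * gcd w w'" "w' = b * gcd w w'" "coprime a b"
    using gcd_coprime_exists[of w w'] assms(4) by auto
  have "m * a * gcd w w' = m' * b * gcd w w'" using assms(3) ab by (metis mult.assoc)
  then have "m * a = m' * b" using assms(4) by simp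
  moreover have "p \<le> \<pi>" if "prime p" "p dvd a \<or> p dvd b" for p
    using that ab \<open>\<pi> = \<pi>'\<close> vaughan_splitD(4)[OF assms(1)] vaughan_splitD(4)[OF assms(2)]
    by (metis dvd_mult2)
  moreover note split' = assms(2)[folded \<open>\<pi> = \<pi>'\<close>]
  ultimately have "b = 1" "a = 1"
    using vaughan_split_cofactor_eq_1[OF assms(1) split' _ ab(3)]
      vaughan_split_cofactor_eq_1[OF split' assms(1) _ ab(3)[unfolded coprime_commute[of a]]]
    by metis+
  then show "m = m'" "w = w'" using ab \<open>m * a = m' * b\<close> by simp_all
qed

section \<open>Decomposition of the smooth Weyl sum\<close>

lemma finite_smooth [simp]: "finite (smooth P R)"
  by (rule finite_subset[of _ "{..nat \<lfloor>P\<rfloor>}"]) (auto simp: smooth_def le_nat_floor)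

lemma finite_primes_le: "finite {p::nat. prime p \<and> real p \<le> R}"
  by (rule finite_subset[of _ "{..nat \<lfloor>R\<rfloor>}"]) (auto simp: le_nat_floor)

lemma finite_Bset [simp]: "finite (Bset M \<pi> R)"
  unfolding Bset_def by (rule finite_subset[OF _ finite_smooth]) auto

lemma finite_Cset [simp]: "finite (Cset q P R)"
  unfolding Cset_def by (rule finite_subset[OF _ finite_smooth]) auto

definition vaughan_pairs :: "nat \<Rightarrow> real \<Rightarrow> real \<Rightarrow> (nat \<times> nat) set" where
  "vaughan_pairs q R M = (SIGMA \<pi>:{p. prime p \<and> real p \<le> R}. {m \<in> Bset M \<pi> R. coprime m q})"

definition vaughan_quadruples :: "nat \<Rightarrow> real \<Rightarrow> real \<Rightarrow> real \<Rightarrow> (nat \<times> nat \<times> nat \<times> nat) set" where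
  "vaughan_quadruples q P R M =
     (SIGMA \<pi>:{p. prime p \<and> real p \<le> R}. SIGMA m:{m \<in> Bset M \<pi> R. coprime m q}.
        SIGMA w:{w \<in> smooth (P / real m) (real \<pi>). coprime w q}. Cset q (P / (real m * real w)) R)"

definition quadruple_prod :: "nat \<times> nat \<times> nat \<times> nat \<Rightarrow> nat" where
  "quadruple_prod = (\<lambda>(\<pi>, m, w, u). m * w * u)"

lemma finite_vaughan_pairs: "finite (vaughan_pairs q R M)"
  unfolding vaughan_pairs_def by (intro finite_SigmaI finite_primes_le) auto

lemma vaughan_quadruplesD:
  assumes "(\<pi>, m, w, u) \<in> vaughan_quadruples q P R M"
  shows "vaughan_split M \<pi> m w" "coprime (m * w) q" "dvd_inf u q" "m * w * u \<in> smooth P R"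
proof -
  from assms have m_mem: "m \<in> Bset M \<pi> R" "coprime m q" and "prime \<pi>" "real \<pi> \<le> R"
    and w_mem: "w \<in> smooth (P / real m) (real \<pi>)" "coprime w q"
    and u_mem: "u \<in> Cset q (P / (real m * real w)) R"
    unfolding vaughan_quadruples_def by auto
  from m_mem(1) w_mem(1) \<open>prime \<pi>\<close> show "vaughan_split M \<pi> m w"
    unfolding vaughan_split_def Bset_def smooth_def by auto
  show "coprime (m * w) q" using m_mem(2) w_mem(2) by simp
  show "dvd_inf u q" using u_mem unfolding Cset_def by simp
  have "1 \<le> m" "1 \<le> w" "1 \<le> u" "real u \<le> P / (real m * real w)"
    using m_mem(1) w_mem(1) u_mem unfolding Bset_def Cset_def smooth_def by auto
  then have "real (m * w * u) \<le> P" by (simp add: field_simps)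
  moreover have "real p \<le> R" if p: "prime p" "p dvd m * w * u" for p
  proof -
    consider "p dvd m" | "p dvd w" | "p dvd u"
      using p by (metis prime_dvd_mult_iff)
    then show ?thesis
    proof cases
      case 2
      then have "real p \<le> real \<pi>" using w_mem(1) \<open>prime p\<close> unfolding smooth_def by auto
      then show ?thesis using \<open>real \<pi> \<le> R\<close> by linarith
    qed (use m_mem(1) u_mem \<open>prime p\<close> in \<open>auto simp: Bset_def Cset_def smooth_def\<close>)
  qed
  ultimately show "m * w * u \<in> smooth P R"
    unfolding smooth_def using \<open>1 \<le> m\<close> \<open>1 \<le> w\<close> \<open>1 \<le> u\<close> by auto
qed

lemma vaughan_quadruplesI:
  assumes "vaughan_split M \<pi> m w" "coprime (m * w) q" "dvd_inf u q" "m * w * u \<in> smooth P R"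
  shows "(\<pi>, m, w, u) \<in> vaughan_quadruples q P R M"
proof -
  note S = vaughan_splitD[OF assms(1)]
  have "1 \<le> m * w * u" and prod_le: "real m * real w * real u \<le> P"
    and R_bound: "\<And>p. prime p \<Longrightarrow> p dvd m * w * u \<Longrightarrow> real p \<le> R"
    using assms(4) unfolding smooth_def by auto
  then have "1 \<le> m" "1 \<le> w" "1 \<le> u" by (simp_all add: Suc_le_eq)
  have R_factor: "real p \<le> R" if "prime p" "p dvd m \<or> p dvd w \<or> p dvd u" for p
    using R_bound[OF that(1)] that(2) by (meson dvd_mult dvd_mult2)
  have "real m * real w \<le> P"
    using prod_le \<open>1 \<le> u\<close> mult_left_mono[of 1 "real u" "real m * real w"] by simp
  then have "real w \<le> P / real m" "real u \<le> P / (real m * real w)"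
    using prod_le \<open>1 \<le> m\<close> \<open>1 \<le> w\<close> by (simp_all add: field_simps)
  moreover have "real \<pi> \<le> R" using R_factor S(1,2) by blast
  moreover have "m \<in> Bset M \<pi> R"
    unfolding Bset_def smooth_def using S R_factor \<open>1 \<le> m\<close> by auto
  ultimately show ?thesis
    unfolding vaughan_quadruples_def Cset_def smooth_def
    using S(1,4) R_factor assms(2,3) \<open>1 \<le> w\<close> \<open>1 \<le> u\<close> by auto
qed

lemma inj_on_quadruple_prod:
  assumes "M \<ge> 0"
  shows "inj_on quadruple_prod (vaughan_quadruples q P R M)"
proof (rule inj_onI)
  fix a b assume a: "a \<in> vaughan_quadruples q P R M" and b: "b \<in> vaughan_quadruples q P R M"
    and eq: "quadruple_prod a = quadruple_prod b"
  obtain \<pi> m w u \<pi>' m' w' u' where ab: "a = (\<pi>, m, w, u)" "b = (\<pi>', m', w', u')"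
    by (cases a, cases b) auto
  note A = vaughan_quadruplesD[OF a[unfolded ab]] and B = vaughan_quadruplesD[OF b[unfolded ab]]
  have eq': "(m * w) * u = (m' * w') * u'" using eq ab by (simp add: quadruple_prod_def)
  then have "u = u'" using coprime_dvd_inf_factorization_unique A(2,3) B(2,3) by blast
  moreover have "u > 0" "w > 0" using A(4) unfolding smooth_def by auto
  ultimately have "m * w = m' * w'" using eq' by simp
  then show "a = b"
    using vaughan_split_unique[OF A(1) B(1) _ \<open>w > 0\<close> assms] ab \<open>u = u'\<close> by simp
qed

lemma quadruple_prod_image: "quadruple_prod ` vaughan_quadruples q P R M \<subseteq> smooth P R"
  using vaughan_quadruplesD(4) by (force simp: quadruple_prod_def)

text \<open>The numbers not of the form \<open>m w u\<close> are those whose part coprime to \<open>q\<close> is at most \<open>M\<close>.\<close>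
lemma smooth_not_quadruple_prod:
  assumes "M \<ge> 1" "q > 0" "x \<in> smooth P R - quadruple_prod ` vaughan_quadruples q P R M"
  obtains v u where "x = v * u" "1 \<le> v" "real v \<le> M" "u \<in> smooth_over (prime_factors q) P"
proof -
  have x: "x \<in> smooth P R" "x \<notin> quadruple_prod ` vaughan_quadruples q P R M" using assms(3) by auto
  then have "x \<ge> 1" "real x \<le> P" unfolding smooth_def by auto
  obtain v u where vu: "x = v * u" "coprime v q" "dvd_inf u q"
    using coprime_dvd_inf_factorization[of x q] \<open>x \<ge> 1\<close> by auto
  have "1 \<le> v" "1 \<le> u" using vu(1) \<open>x \<ge> 1\<close> by (simp_all add: Suc_le_eq)
  have "u \<le> x" using vu(1) \<open>1 \<le> v\<close> by simp
  have "p \<in> prime_factors q" if "prime p" "p dvd u" for p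
    using that vu(3) assms(2) unfolding dvd_inf_def by (simp add: in_prime_factors_iff)
  then have "u \<in> smooth_over (prime_factors q) P"
    unfolding smooth_over_def using \<open>1 \<le> u\<close> \<open>u \<le> x\<close> \<open>real x \<le> P\<close> by simp
  moreover have "real v \<le> M"
  proof (rule ccontr)
    assume "\<not> real v \<le> M"
    then have "real v > M" by simp
    then obtain \<pi> m w where split: "vaughan_split M \<pi> m w" "v = m * w"
      using vaughan_split_exists[OF assms(1)] by blast
    have "(\<pi>, m, w, u) \<in> vaughan_quadruples q P R M"
      using split(1) vu(2,3) x(1) unfolding vu(1) split(2) by (rule vaughan_quadruplesI)
    moreover have "quadruple_prod (\<pi>, m, w, u) = x"
      unfolding quadruple_prod_def vu(1) split(2) by simp
    ultimately show False using x(2) by (metis image_eqI)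
  qed
  ultimately show thesis using that vu(1) \<open>1 \<le> v\<close> by blast
qed

lemma card_smooth_not_quadruple_prod:
  assumes "M \<ge> 1" "q > 0"
  shows "real (card (smooth P R - quadruple_prod ` vaughan_quadruples q P R M))
           \<le> M * real (card (smooth_over (prime_factors q) P))"
proof -
  let ?S = "smooth_over (prime_factors q) P"
  have "smooth P R - quadruple_prod ` vaughan_quadruples q P R M
          \<subseteq> (\<lambda>(v, u). v * u) ` ({1..nat \<lfloor>M\<rfloor>} \<times> ?S)"
  proof
    fix x assume "x \<in> smooth P R - quadruple_prod ` vaughan_quadruples q P R M"
    then obtain v u where "x = v * u" "1 \<le> v" "real v \<le> M" "u \<in> ?S"
      using smooth_not_quadruple_prod[OF assms] by blast
    then show "x \<in> (\<lambda>(v, u). v * u) ` ({1..nat \<lfloor>M\<rfloor>} \<times> ?S)"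
      by (intro image_eqI[of _ _ "(v, u)"]) (auto simp: le_nat_floor)
  qed
  then have "card (smooth P R - quadruple_prod ` vaughan_quadruples q P R M)
               \<le> card ((\<lambda>(v, u). v * u) ` ({1..nat \<lfloor>M\<rfloor>} \<times> ?S))"
    by (intro card_mono) auto
  also have "\<dots> \<le> nat \<lfloor>M\<rfloor> * card ?S"
    using card_image_le[of "{1..nat \<lfloor>M\<rfloor>} \<times> ?S" "\<lambda>(v, u). v * u"]
    by (simp add: card_cartesian_product)
  finally have "real (card (smooth P R - quadruple_prod ` vaughan_quadruples q P R M))
                  \<le> real (nat \<lfloor>M\<rfloor>) * real (card ?S)"
    by (metis of_nat_le_iff of_nat_mult)
  also have "\<dots> \<le> M * real (card ?S)" using assms(1) by (intro mult_right_mono) auto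
  finally show ?thesis .
qed

text \<open>\<open>m\<close> determines \<open>\<pi>\<close> as its least prime factor, and \<open>m \<le> M \<pi> \<le> M R\<close>.\<close>
lemma card_vaughan_pairs_le:
  assumes "M \<ge> 0" "R \<ge> 0"
  shows "real (card (vaughan_pairs q R M)) \<le> M * R"
proof -
  have "inj_on snd (vaughan_pairs q R M)"
  proof (rule inj_onI)
    fix a b assume "a \<in> vaughan_pairs q R M" "b \<in> vaughan_pairs q R M" "snd a = snd b"
    then show "a = b"
      unfolding vaughan_pairs_def Bset_def by (cases a, cases b) (auto intro: le_antisym)
  qed
  moreover have "snd ` vaughan_pairs q R M \<subseteq> {1..nat \<lfloor>M * R\<rfloor>}"
  proof
    fix m assume "m \<in> snd ` vaughan_pairs q R M"
    then obtain \<pi> where "real \<pi> \<le> R" "m \<in> Bset M \<pi> R" by (auto simp: vaughan_pairs_def)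
    moreover have "M * real \<pi> \<le> M * R" using \<open>real \<pi> \<le> R\<close> assms(1) by (rule mult_left_mono)
    ultimately show "m \<in> {1..nat \<lfloor>M * R\<rfloor>}"
      unfolding Bset_def smooth_def by (auto simp: le_nat_floor)
  qed
  ultimately have "card (vaughan_pairs q R M) \<le> nat \<lfloor>M * R\<rfloor>"
    by (metis card_atLeastAtMost card_image card_mono diff_Suc_1 finite_atLeastAtMost)
  then have "real (card (vaughan_pairs q R M)) \<le> real (nat \<lfloor>M * R\<rfloor>)" by simp
  also have "\<dots> \<le> M * R" using assms by simp
  finally show ?thesis .
qed

lemma norm_e [simp]: "norm (e z) = 1"
  unfolding e_def by (simp add: norm_exp_eq_Re)

lemma sum_SIGMA_SIGMA_SIGMA:
  assumes "finite A" "\<And>a. a \<in> A \<Longrightarrow> finite (B a)" "\<And>a b. finite (C a b)"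
    "\<And>a b c. finite (D a b c)"
  shows "(\<Sum>z\<in>(SIGMA a:A. SIGMA b:B a. SIGMA c:C a b. D a b c). f z)
           = (\<Sum>a\<in>A. \<Sum>b\<in>B a. \<Sum>c\<in>C a b. \<Sum>d\<in>D a b c. f (a, b, c, d))"
  using assms by (simp add: sum.Sigma split_def)

lemma sum_vaughan_pairs:
  "(\<Sum>\<pi>\<in>{p. prime p \<and> real p \<le> R}. \<Sum>m\<in>{m \<in> Bset M \<pi> R. coprime m q}. f \<pi> m)
     = (\<Sum>z\<in>vaughan_pairs q R M. f (fst z) (snd z))"
  unfolding vaughan_pairs_def using finite_primes_le by (subst sum.Sigma) (auto simp: split_def)

lemma fsum_eq_exceptional_plus_gstar:
  assumes "M \<ge> 0"
  shows "fsum k \<alpha> P R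
     = (\<Sum>x\<in>smooth P R - quadruple_prod ` vaughan_quadruples q P R M. e (\<alpha> * real x ^ k))
     + (\<Sum>\<pi>\<in>{p. prime p \<and> real p \<le> R}. \<Sum>m\<in>{m \<in> Bset M \<pi> R. coprime m q}.
          gstar k q \<pi> (\<alpha> * real m ^ k) P m R)"
proof -
  let ?h = "\<lambda>x::nat. e (\<alpha> * real x ^ k)"
  let ?Q = "vaughan_quadruples q P R M"
  have "(\<Sum>x\<in>quadruple_prod ` ?Q. ?h x) = (\<Sum>z\<in>?Q. ?h (quadruple_prod z))"
    using sum.reindex[OF inj_on_quadruple_prod[OF assms]] by simp
  also have "\<dots> = (\<Sum>\<pi>\<in>{p. prime p \<and> real p \<le> R}. \<Sum>m\<in>{m \<in> Bset M \<pi> R. coprime m q}.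
      \<Sum>w\<in>{w \<in> smooth (P / real m) (real \<pi>). coprime w q}. \<Sum>u\<in>Cset q (P / (real m * real w)) R.
        ?h (m * w * u))"
    unfolding vaughan_quadruples_def quadruple_prod_def
    by (subst sum_SIGMA_SIGMA_SIGMA) (auto intro: finite_primes_le)
  also have "\<dots> = (\<Sum>\<pi>\<in>{p. prime p \<and> real p \<le> R}. \<Sum>m\<in>{m \<in> Bset M \<pi> R. coprime m q}.
          gstar k q \<pi> (\<alpha> * real m ^ k) P m R)"
    unfolding gstar_def by (simp add: power_mult_distrib mult_ac)
  finally have "(\<Sum>x\<in>quadruple_prod ` ?Q. ?h x) = (\<Sum>\<pi>\<in>{p. prime p \<and> real p \<le> R}.
      \<Sum>m\<in>{m \<in> Bset M \<pi> R. coprime m q}. gstar k q \<pi> (\<alpha> * real m ^ k) P m R)" .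
  moreover have "fsum k \<alpha> P R
      = (\<Sum>x\<in>smooth P R - quadruple_prod ` ?Q. ?h x) + (\<Sum>x\<in>quadruple_prod ` ?Q. ?h x)"
    unfolding fsum_def by (rule sum.subset_diff[OF quadruple_prod_image finite_smooth])
  ultimately show ?thesis by simp
qed

lemma cmod_fsum_powr_le:
  assumes "M \<ge> 1" "R \<ge> 0" "q > 0" "s \<ge> 1"
  shows "cmod (fsum k \<alpha> P R) powr s
           \<le> 2 powr (s - 1) * ((M * real (card (smooth_over (prime_factors q) P))) powr s
              + (M * R) powr (s - 1) * (\<Sum>\<pi>\<in>{p. prime p \<and> real p \<le> R}.
                   \<Sum>m\<in>{m \<in> Bset M \<pi> R. coprime m q}.
                     cmod (gstar k q \<pi> (\<alpha> * real m ^ k) P m R) powr s))"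
proof -
  have "M \<ge> 0" using assms(1) by simp
  let ?E = "smooth P R - quadruple_prod ` vaughan_quadruples q P R M"
  let ?a = "M * real (card (smooth_over (prime_factors q) P))"
  let ?G = "\<lambda>z. gstar k q (fst z) (\<alpha> * real (snd z) ^ k) P (snd z) R"
  let ?b = "\<Sum>z\<in>vaughan_pairs q R M. cmod (?G z)"
  have "cmod (\<Sum>x\<in>?E. e (\<alpha> * real x ^ k)) \<le> real (card ?E)"
    using norm_sum[of "\<lambda>x. e (\<alpha> * real x ^ k)" ?E] by simp
  also have "\<dots> \<le> ?a" using card_smooth_not_quadruple_prod assms(1,3) by blast
  finally have "cmod (\<Sum>x\<in>?E. e (\<alpha> * real x ^ k)) \<le> ?a" .
  moreover have "cmod (\<Sum>z\<in>vaughan_pairs q R M. ?G z) \<le> ?b" by (rule norm_sum)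
  moreover have "cmod (fsum k \<alpha> P R)
      \<le> cmod (\<Sum>x\<in>?E. e (\<alpha> * real x ^ k)) + cmod (\<Sum>z\<in>vaughan_pairs q R M. ?G z)"
    unfolding fsum_eq_exceptional_plus_gstar[OF \<open>M \<ge> 0\<close>, of k \<alpha> P R q] sum_vaughan_pairs
    by (rule norm_triangle_ineq)
  ultimately have "cmod (fsum k \<alpha> P R) \<le> ?a + ?b" by linarith
  then have "cmod (fsum k \<alpha> P R) powr s \<le> (?a + ?b) powr s"
    using assms(4) by (intro powr_mono2) auto
  also have "\<dots> \<le> 2 powr (s - 1) * (?a powr s + ?b powr s)"
    using assms by (intro powr_add_le sum_nonneg) auto
  also have "?b powr s \<le> real (card (vaughan_pairs q R M)) powr (s - 1)
                            * (\<Sum>z\<in>vaughan_pairs q R M. cmod (?G z) powr s)"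
    using assms(4) by (intro powr_sum_le_card_powr_sum finite_vaughan_pairs) auto
  also have "\<dots> \<le> (M * R) powr (s - 1) * (\<Sum>z\<in>vaughan_pairs q R M. cmod (?G z) powr s)"
    using card_vaughan_pairs_le[of M R q] assms
    by (intro mult_right_mono powr_mono2 sum_nonneg) auto
  finally show ?thesis unfolding sum_vaughan_pairs by simp
qed

section \<open>Integration over the arcs\<close>

lemma Marc_subset_intervals:
  assumes "q > 0"
  shows "Marc k q Q P \<subseteq> (\<Union>a\<le>q. {(real a - Q * P powr (- real k)) / real q
                                  .. (real a + Q * P powr (- real k)) / real q})"
proof
  fix \<alpha> assume "\<alpha> \<in> Marc k q Q P"
  then obtain a where "a \<le> q" "\<bar>real q * \<alpha> - real a\<bar> \<le> Q * P powr (- real k)"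
    unfolding Marc_def by (auto split: if_splits)
  then show "\<alpha> \<in> (\<Union>a\<le>q. {(real a - Q * P powr (- real k)) / real q
                           .. (real a + Q * P powr (- real k)) / real q})"
    using assms by (auto simp: field_simps abs_le_iff)
qed

lemma sets_Marc [measurable]: "Marc k q Q P \<in> sets lborel"
proof -
  have "Marc k q Q P = (if real q \<le> Q then {0..<1} \<inter> (\<Union>a\<in>{a. a \<le> q \<and> coprime a q}.
          {\<alpha>. \<bar>real q * \<alpha> - real a\<bar> \<le> Q * P powr (- real k)}) else {})"
    unfolding Marc_def by auto
  moreover have "closed {\<alpha>::real. \<bar>real q * \<alpha> - real a\<bar> \<le> Q * P powr (- real k)}" for a
    by (intro closed_Collect_le continuous_intros)
  ultimately show ?thesis by (auto intro!: sets.Int sets.finite_UN borel_closed)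
qed

lemma sets_Narc [measurable]: "Narc k q Q P \<in> sets lborel"
  unfolding Narc_def by (intro sets.Diff sets_Marc)

lemma Marc_subset_unit_interval: "Marc k q Q P \<subseteq> {0..1}"
  unfolding Marc_def by auto

lemma Narc_subset_Marc: "Narc k q Q P \<subseteq> Marc k q Q P"
  unfolding Narc_def by auto

text \<open>The \<open>q + 1\<close> intervals around \<open>a / q\<close> have length \<open>2 Q P\<^sup>-\<^sup>k / q\<close> each.\<close>
lemma measure_Marc_le:
  assumes "q \<ge> 1" "Q \<ge> 0"
  shows "measure lborel (Marc k q Q P) \<le> 4 * Q * P powr (- real k)"
proof -
  define c where "c = Q * P powr (- real k)"
  have "c \<ge> 0" unfolding c_def using assms(2) by simp
  let ?I = "\<lambda>a::nat. {(real a - c) / real q .. (real a + c) / real q}"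
  have "measure lborel (Marc k q Q P) \<le> measure lborel (\<Union>a\<le>q. ?I a)"
    using Marc_subset_intervals[of q k Q P] assms(1) unfolding c_def
    by (intro measure_mono_fmeasurable sets_Marc fmeasurable_compact compact_UN) auto
  also have "\<dots> \<le> (\<Sum>a\<le>q. measure lborel (?I a))" by (rule measure_UNION_le) auto
  also have "\<dots> = (\<Sum>a\<le>q. 2 * c / real q)"
  proof (intro sum.cong refl)
    fix a
    have "(real a - c) / real q \<le> (real a + c) / real q"
      using \<open>c \<ge> 0\<close> by (intro divide_right_mono) auto
    then show "measure lborel (?I a) = 2 * c / real q" by (simp add: diff_divide_distrib[symmetric])
  qed
  also have "\<dots> = 2 * c + 2 * c / real q" using assms(1) by (simp add: field_simps)
  also have "\<dots> \<le> 4 * c" using assms(1) \<open>c \<ge> 0\<close> by (simp add: divide_le_eq mult_le_cancel_left1)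
  finally show ?thesis unfolding c_def by simp
qed

lemma set_integrable_cmod_powr:
  fixes F :: "real \<Rightarrow> complex"
  assumes "continuous_on UNIV F" "s > 0" "A \<in> sets lborel" "A \<subseteq> {0..1}"
  shows "set_integrable lborel A (\<lambda>\<alpha>. cmod (F \<alpha>) powr s)"
proof -
  have "continuous_on {0..1} (\<lambda>\<alpha>. cmod (F \<alpha>) powr s)"
    using assms(2)
    by (intro continuous_on_powr' continuous_intros continuous_on_subset[OF assms(1)]) auto
  then have "set_integrable lborel {0..1} (\<lambda>\<alpha>. cmod (F \<alpha>) powr s)"
    by (rule borel_integrable_atLeastAtMost')
  then show ?thesis using assms(3,4) by (rule set_integrable_subset)
qed

lemma set_integral_sum:
  fixes f :: "'i \<Rightarrow> 'a \<Rightarrow> 'b::{banach, second_countable_topology}"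
  assumes "\<And>i. i \<in> I \<Longrightarrow> set_integrable M A (f i)"
  shows "set_integrable M A (\<lambda>x. \<Sum>i\<in>I. f i x)"
    and "(LINT x:A|M. \<Sum>i\<in>I. f i x) = (\<Sum>i\<in>I. LINT x:A|M. f i x)"
  using assms unfolding set_integrable_def set_lebesgue_integral_def
  by (simp_all add: scaleR_sum_right integral_sum)

lemma set_integral_fsum_powr_le:
  assumes "A \<in> sets lborel" "A \<subseteq> {0..1}" "M \<ge> 1" "R \<ge> 0" "q > 0" "s \<ge> 1"
  shows "(LINT \<alpha>:A|lborel. cmod (fsum k \<alpha> P R) powr s)
    \<le> 2 powr (s - 1) * ((M * real (card (smooth_over (prime_factors q) P))) powr s
                           * measure lborel A
       + (M * R) powr (s - 1) * (\<Sum>\<pi>\<in>{p. prime p \<and> real p \<le> R}. \<Sum>m\<in>{m \<in> Bset M \<pi> R. coprime m q}.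
          (LINT \<alpha>:A|lborel. cmod (gstar k q \<pi> (\<alpha> * real m ^ k) P m R) powr s)))"
proof -
  let ?a = "(M * real (card (smooth_over (prime_factors q) P))) powr s"
  let ?h = "\<lambda>\<pi> m \<alpha>. cmod (gstar k q \<pi> (\<alpha> * real m ^ k) P m R) powr s"
  let ?H = "\<lambda>\<alpha>. \<Sum>\<pi>\<in>{p. prime p \<and> real p \<le> R}. \<Sum>m\<in>{m \<in> Bset M \<pi> R. coprime m q}. ?h \<pi> m \<alpha>"
  have "emeasure lborel A \<noteq> \<infinity>"
    using emeasure_mono[OF assms(2), of lborel] by (auto simp: top_unique)
  have int_h: "set_integrable lborel A (?h \<pi> m)" for \<pi> m
    using assms
    by (intro set_integrable_cmod_powr) (auto simp: gstar_def e_def intro!: continuous_intros)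
  then have int_H: "set_integrable lborel A ?H" by (intro set_integral_sum(1))
  have int_a: "set_integrable lborel A (\<lambda>_. ?a)"
    unfolding set_integrable_def using assms(1) \<open>emeasure lborel A \<noteq> \<infinity>\<close>
    by (intro integrable_indicator) (auto simp: less_top)
  have "(LINT \<alpha>:A|lborel. cmod (fsum k \<alpha> P R) powr s)
          \<le> (LINT \<alpha>:A|lborel. 2 powr (s - 1) * (?a + (M * R) powr (s - 1) * ?H \<alpha>))"
    using assms int_a int_H
    by (intro set_integral_mono cmod_fsum_powr_le set_integrable_cmod_powr)
      (auto simp: fsum_def e_def intro!: continuous_intros)
  also have "\<dots> = 2 powr (s - 1) * (?a * measure lborel A + (M * R) powr (s - 1)
                   * (\<Sum>\<pi>\<in>{p. prime p \<and> real p \<le> R}. \<Sum>m\<in>{m \<in> Bset M \<pi> R. coprime m q}.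
                        (LINT \<alpha>:A|lborel. ?h \<pi> m \<alpha>)))"
    using int_a int_H int_h assms(1) \<open>emeasure lborel A \<noteq> \<infinity>\<close>
    by (simp add: set_integral_add set_integral_const set_integral_sum)
  finally show ?thesis .
qed

text \<open>With \<open>\<delta> = \<epsilon> / (s (1 + k))\<close>, Rankin's bound and \<open>q P \<le> P\<^bsup>1+k\<^esup>\<close> give \<open>P\<^bsup>\<epsilon>\<^esup>\<close>.\<close>
lemma card_smooth_over_prime_factors_powr_le:
  assumes "\<epsilon> > 0" "s > 0" "q \<ge> 1" "P \<ge> 1" "real q \<le> P powr (real k / 2)"
  shows "real (card (smooth_over (prime_factors q) P)) powr s
           \<le> rankin_const (\<epsilon> / (s * (1 + real k))) powr s * P powr \<epsilon>"
proof -
  define \<delta> where "\<delta> = \<epsilon> / (s * (1 + real k))"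
  have "\<delta> > 0" unfolding \<delta>_def using assms(1,2) by simp
  have "real (card (smooth_over (prime_factors q) P))
          \<le> (\<Prod>p\<in>prime_factors q. 1 / (1 - real p powr (-\<delta>))) * P powr \<delta>"
    using \<open>\<delta> > 0\<close> assms(4) by (intro card_smooth_over_le) auto
  also have "\<dots> \<le> rankin_const \<delta> * real q powr \<delta> * P powr \<delta>"
    using euler_product_prime_factors_le[OF \<open>\<delta> > 0\<close>] assms(3) by (intro mult_right_mono) auto
  also have "\<dots> \<le> rankin_const \<delta> * (P powr (real k / 2)) powr \<delta> * P powr \<delta>"
    using assms(5) \<open>\<delta> > 0\<close> rankin_const_nonneg
    by (intro mult_right_mono mult_left_mono powr_mono2) auto
  also have "\<dots> = rankin_const \<delta> * P powr (\<delta> * (1 + real k / 2))"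
    using assms(4) by (simp add: powr_powr powr_add[symmetric] algebra_simps)
  also have "\<dots> \<le> rankin_const \<delta> * P powr (\<epsilon> / s)"
  proof -
    have "\<delta> * (1 + real k / 2) \<le> \<delta> * (1 + real k)" using \<open>\<delta> > 0\<close> by simp
    also have "\<dots> = \<epsilon> / s"
    proof -
      have "s * (1 + real k) > 0" using assms(2) by simp
      then have "s + s * real k \<noteq> 0" by (simp add: algebra_simps)
      then show ?thesis unfolding \<delta>_def using assms(2) by (simp add: field_simps)
    qed
    finally show ?thesis
      using assms(4) \<open>\<delta> > 0\<close> rankin_const_nonneg by (intro mult_left_mono powr_mono) auto
  qed
  finally have "real (card (smooth_over (prime_factors q) P)) powr s
                  \<le> (rankin_const \<delta> * P powr (\<epsilon> / s)) powr s"
    using assms(2) by (intro powr_mono2) auto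
  also have "\<dots> = rankin_const \<delta> powr s * P powr \<epsilon>"
    using assms(2,4) \<open>\<delta> > 0\<close> rankin_const_nonneg by (simp add: powr_mult powr_powr)
  finally show ?thesis unfolding \<delta>_def .
qed

definition moment_const :: "nat \<Rightarrow> real \<Rightarrow> real \<Rightarrow> real" where
  "moment_const k s \<epsilon> = 2 powr (s - 1) * (1 + 4 * rankin_const (\<epsilon> / (s * (1 + real k))) powr s)"

lemma moment_const_pos: "moment_const k s \<epsilon> > 0"
  unfolding moment_const_def by (simp add: add_pos_nonneg)

lemma exceptional_moment_le:
  assumes "A \<in> sets lborel" "A \<subseteq> Marc k q Q P" "\<epsilon> > 0" "s > 0" "M \<ge> 0" "q \<ge> 1"
    "P \<ge> 1" "Q \<ge> 0" "real q \<le> P powr (real k / 2)"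
  shows "(M * real (card (smooth_over (prime_factors q) P))) powr s * measure lborel A
           \<le> 4 * rankin_const (\<epsilon> / (s * (1 + real k))) powr s * (Q * M powr s * P powr (\<epsilon> - real k))"
proof -
  let ?c = "real (card (smooth_over (prime_factors q) P))"
  let ?K = "rankin_const (\<epsilon> / (s * (1 + real k))) powr s"
  have "Marc k q Q P \<in> fmeasurable lborel"
    by (rule fmeasurableI2[OF fmeasurable_compact[OF compact_Icc]
          Marc_subset_unit_interval sets_Marc])
  then have "measure lborel A \<le> measure lborel (Marc k q Q P)"
    using assms(1,2) by (intro measure_mono_fmeasurable)
  also have "\<dots> \<le> 4 * Q * P powr (- real k)" using assms(6,8) by (rule measure_Marc_le)
  finally have "measure lborel A \<le> 4 * Q * P powr (- real k)" .
  moreover have "(M * ?c) powr s = M powr s * ?c powr s" using assms(5) by (simp add: powr_mult)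
  moreover have "?c powr s \<le> ?K * P powr \<epsilon>"
    using assms(3,4,6,7,9) by (rule card_smooth_over_prime_factors_powr_le)
  ultimately have "(M * ?c) powr s * measure lborel A
                     \<le> M powr s * (?K * P powr \<epsilon>) * (4 * Q * P powr (- real k))"
    by (auto intro!: mult_mono mult_left_mono)
  also have "\<dots> = 4 * ?K * (Q * M powr s * P powr (\<epsilon> - real k))"
    using assms(7) by (simp add: powr_diff powr_minus divide_inverse mult_ac)
  finally show ?thesis .
qed

lemma arc_moment_le:
  assumes "A \<in> sets lborel" "A \<subseteq> Marc k q Q P" "\<epsilon> > 0" "s \<ge> 1" "M \<ge> 1" "R \<ge> 0" "q \<ge> 1"
    "P \<ge> 1" "Q \<ge> 0" "real q \<le> P powr (real k / 2)"
  shows "(LINT \<alpha>:A|lborel. cmod (fsum k \<alpha> P R) powr s)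
    \<le> moment_const k s \<epsilon> * ((M * R) powr (s - 1) * (\<Sum>\<pi>\<in>{p. prime p \<and> real p \<le> R}.
          \<Sum>m\<in>{m \<in> Bset M \<pi> R. coprime m q}.
            (LINT \<alpha>:A|lborel. cmod (gstar k q \<pi> (\<alpha> * real m ^ k) P m R) powr s))
        + Q * M powr s * P powr (\<epsilon> - real k))"
  (is "_ \<le> _ * (?b * ?X + ?E)")
proof -
  let ?K = "rankin_const (\<epsilon> / (s * (1 + real k))) powr s"
  have "?X \<ge> 0"
    unfolding set_lebesgue_integral_def
    by (intro sum_nonneg Bochner_Integration.integral_nonneg) (auto simp: indicator_def)
  have "?E \<ge> 0" "?b \<ge> 0" "?K \<ge> 0" using assms(9) by auto
  have "(LINT \<alpha>:A|lborel. cmod (fsum k \<alpha> P R) powr s)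
          \<le> 2 powr (s - 1) * ((M * real (card (smooth_over (prime_factors q) P))) powr s
                                * measure lborel A + ?b * ?X)"
    using assms(1,2) Marc_subset_unit_interval assms(4-7)
    by (intro set_integral_fsum_powr_le) fastforce+
  also have "\<dots> \<le> 2 powr (s - 1) * (4 * ?K * ?E + ?b * ?X)"
    using exceptional_moment_le[of A k q Q P \<epsilon> s M] assms by simp
  also have "\<dots> \<le> 2 powr (s - 1) * ((1 + 4 * ?K) * (?b * ?X + ?E))"
  proof -
    have "(1 + 4 * ?K) * (?b * ?X + ?E) = (4 * ?K * ?E + ?b * ?X) + (?E + 4 * ?K * (?b * ?X))"
      by (simp add: algebra_simps)
    moreover have "0 \<le> ?K * (?b * ?X)"
      using \<open>?K \<ge> 0\<close> \<open>?b \<ge> 0\<close> \<open>?X \<ge> 0\<close> by simp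
    ultimately show ?thesis using \<open>?E \<ge> 0\<close> by (intro mult_left_mono) auto
  qed
  finally show ?thesis unfolding moment_const_def by (simp add: mult.assoc)
qed

lemma arc_moments_le:
  assumes "\<epsilon> > 0" "s \<ge> 1" "P \<ge> 1" "2 \<le> R" "1 \<le> Q" "Q \<le> P powr (real k / 2)" "R \<le> M"
    "1 \<le> q" "real q \<le> Q"
  shows "(LINT \<alpha>:Narc k q Q P|lborel. cmod (fsum k \<alpha> P R) powr s)
           \<le> moment_const k s \<epsilon> * ((M * R) powr (s - 1) * Iq k s Narc q Q P R M
                                   + Q * M powr s * P powr (\<epsilon> - real k))"
    and "(LINT \<alpha>:Marc k q Q P|lborel. cmod (fsum k \<alpha> P R) powr s)
           \<le> moment_const k s \<epsilon> * ((M * R) powr (s - 1) * Iq k s Marc q Q P R M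
                                   + Q * M powr s * P powr (\<epsilon> - real k))"
  using assms unfolding Iq_def
  by (intro arc_moment_le sets_Narc sets_Marc Narc_subset_Marc order_refl; linarith)+

theorem lemma3p4:
  fixes k :: nat and s :: real
  assumes "k \<ge> 1" and "s > 1"
  shows "\<forall>\<epsilon>>0. \<exists>\<eta>>0. \<exists>C>0. \<exists>P0. \<forall>P\<ge>P0. \<forall>R Q M :: real. \<forall>q :: nat.
     2 \<le> R \<and> R \<le> P powr \<eta> \<and> 1 \<le> Q \<and> Q \<le> P powr (real k / 2) \<and> M \<ge> R
     \<and> 1 \<le> q \<and> real q \<le> Q \<longrightarrow>
       (LINT \<alpha>:Narc k q Q P|lborel. cmod (fsum k \<alpha> P R) powr s)
         \<le> C * ((M * R) powr (s - 1) * Iq k s Narc q Q P R M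
                + Q * M powr s * P powr (\<epsilon> - real k))
     \<and> (LINT \<alpha>:Marc k q Q P|lborel. cmod (fsum k \<alpha> P R) powr s)
         \<le> C * ((M * R) powr (s - 1) * Iq k s Marc q Q P R M
                + Q * M powr s * P powr (\<epsilon> - real k))"
  apply (intro allI impI)
  subgoal for \<epsilon>
    apply (rule exI[of _ 1], rule conjI[OF zero_less_one])
    apply (rule exI[of _ "moment_const k s \<epsilon>"], rule conjI[OF moment_const_pos])
    apply (rule exI[of _ 1])
    using assms(2) by (auto intro!: arc_moments_le)
  done

end
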